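(* The map $\tau_{sm}:\widetilde{\mathbb{K}}_{sm}\to\widetilde{\mathbb{K}}_{co}$, $[(r_\varepsilon)_\varepsilon]\mapsto[(r_\varepsilon)_\varepsilon]$, is a ring isomorphism; i.e., $\widetilde{\mathbb{K}}_{sm}\cong\widetilde{\mathbb{K}}_{co}$ via $\tau_{sm}$.
   Context: Let $I=(0,1]$ and $\mathbb{K}\in\{\mathbb{R},\mathbb{C}\}$. Let $\mathcal{E}_M=\{(r_\varepsilon)_\varepsilon\in\mathbb{K}^I:\exists N\in\mathbb{N}: |r_\varepsilon|=O(\varepsilon^{-N})\text{ as }\varepsilon\to0\}$ and $\mathcal{N}=\{(r_\varepsilon)_\varepsilon\in\mathbb{K}^I:\forall m\in\mathbb{N}: |r_\varepsilon|=O(\varepsilon^{m})\}$. Let $\mathcal{E}_{M,co}$, $\mathcal{N}_{co}$ (resp. $\mathcal{E}_{M,sm}$, $\mathcal{N}_{sm}$) be the subsets of $\mathcal{E}_M$, $\mathcal{N}$ consisting of nets with $\varepsilon\mapsto r_\varepsilon$ continuous (resp. smooth) on $I$; $\widetilde{\mathbb{K}}_{co}=\mathcal{E}_{M,co}/\mathcal{N}_{co}$ and $\widetilde{\mathbb{K}}_{sm}=\mathcal{E}_{M,sm}/\mathcal{N}_{sm}$ are rings with componentwise operations. *)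

theory Defs
  imports Complex_Main "HOL-Algebra.QuotRing"
begin

text \<open>Nets indexed by I = (0,1] are represented as functions real => 'k that vanish
  outside I (canonical representatives, so that equality of nets is equality of functions).\<close>

definition I_eps :: "real set" where
  "I_eps = {0<..1}"

definition net :: "(real \<Rightarrow> 'k::zero) \<Rightarrow> bool" where
  "net r \<longleftrightarrow> (\<forall>e. e \<notin> I_eps \<longrightarrow> r e = 0)"

definition moderate :: "(real \<Rightarrow> 'k::real_normed_field) \<Rightarrow> bool" where
  "moderate r \<longleftrightarrow> (\<exists>N::nat. \<exists>C. \<forall>\<^sub>F e in at_right 0. norm (r e) \<le> C * (1 / e) ^ N)"

definition negligible :: "(real \<Rightarrow> 'k::real_normed_field) \<Rightarrow> bool" where
  "negligible r \<longleftrightarrow> (\<forall>m::nat. \<exists>C. \<forall>\<^sub>F e in at_right 0. norm (r e) \<le> C * e ^ m)"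

definition smooth_on_I :: "(real \<Rightarrow> 'k::real_normed_field) \<Rightarrow> bool" where
  "smooth_on_I r \<longleftrightarrow> (\<exists>D :: nat \<Rightarrow> real \<Rightarrow> 'k. (\<forall>e\<in>I_eps. D 0 e = r e) \<and>
     (\<forall>n. \<forall>e\<in>I_eps. (D n has_vector_derivative D (Suc n) e) (at e within I_eps)))"

definition EM_co :: "(real \<Rightarrow> 'k::real_normed_field) set" where
  "EM_co = {r. net r \<and> moderate r \<and> continuous_on I_eps r}"

definition N_co :: "(real \<Rightarrow> 'k::real_normed_field) set" where
  "N_co = {r. net r \<and> negligible r \<and> continuous_on I_eps r}"

definition EM_sm :: "(real \<Rightarrow> 'k::real_normed_field) set" where
  "EM_sm = {r. net r \<and> moderate r \<and> smooth_on_I r}"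

definition N_sm :: "(real \<Rightarrow> 'k::real_normed_field) set" where
  "N_sm = {r. net r \<and> negligible r \<and> smooth_on_I r}"

definition net_ring :: "(real \<Rightarrow> 'k::real_normed_field) set \<Rightarrow> (real \<Rightarrow> 'k) ring" where
  "net_ring S = \<lparr>carrier = S, mult = (\<lambda>r s e. r e * s e),
      one = (\<lambda>e. if e \<in> I_eps then 1 else 0), zero = (\<lambda>e. 0), add = (\<lambda>r s e. r e + s e)\<rparr>"

definition K_co :: "(real \<Rightarrow> 'k::real_normed_field) set ring" where
  "K_co = net_ring EM_co Quot N_co"

definition K_sm :: "(real \<Rightarrow> 'k::real_normed_field) set ring" where
  "K_sm = net_ring EM_sm Quot N_sm"

text \<open>tau_sm [r]_sm = [r]_co: the N_co-class of any (every) representative of the given class.\<close>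
definition tau_sm :: "(real \<Rightarrow> 'k::real_normed_field) set \<Rightarrow> (real \<Rightarrow> 'k) set" where
  "tau_sm X = (\<Union>r\<in>X. N_co +>\<^bsub>net_ring EM_co\<^esub> r)"

end

theory Submission
  imports Defs "HOL-Analysis.Analysis" "HOL-Computational_Algebra.Polynomial"
begin

text \<open>Since \<open>N_sm \<subseteq> N_co\<close> and \<open>EM_sm \<subseteq> EM_co\<close>, \<open>\<tau>_sm\<close> is a well-defined ring homomorphism,
  and it is injective because a smooth net that is negligible already lies in \<open>N_sm\<close>.
  Surjectivity is the real content: every continuous net \<open>r\<close> admits a smooth \<open>s\<close> with
  \<open>|s\<^sub>\<epsilon> - r\<^sub>\<epsilon>| \<le> C exp(-1/\<epsilon>)\<close>, and such a difference is negligible. After the substitution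
  \<open>u = 1/\<epsilon>\<close> one has to approximate a continuous function on \<open>[0,\<infinity>)\<close> up to \<open>2 exp(-u)\<close>:
  choose polynomials \<open>p\<^sub>k\<close> that are \<open>exp(-(k+1))\<close>-close on \<open>[k-1,k+1]\<close> (Stone--Weierstrass)
  and glue them with a smooth partition of unity built from the flat function \<open>exp(-1/x)\<close>.\<close>

section \<open>Smooth real functions\<close>

text \<open>Derivatives are taken at \<open>x\<close>, not within \<open>U\<close>: the notion is meant for open \<open>U\<close>.\<close>

fun Cn :: "nat \<Rightarrow> (real \<Rightarrow> real) \<Rightarrow> real set \<Rightarrow> bool" where
  "Cn 0 f U = continuous_on U f"
| "Cn (Suc n) f U = (\<exists>f'. (\<forall>x\<in>U. (f has_real_derivative f' x) (at x)) \<and> Cn n f' U)"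

definition smooth_on :: "real set \<Rightarrow> (real \<Rightarrow> real) \<Rightarrow> bool" where
  "smooth_on U f \<longleftrightarrow> (\<forall>n. Cn n f U)"

lemma Cn_cong:
  assumes "open U" "\<And>x. x \<in> U \<Longrightarrow> f x = g x" "Cn n f U"
  shows "Cn n g U"
  using assms
proof (induction n arbitrary: f g)
  case 0
  then show ?case using continuous_on_cong by force
next
  case (Suc n)
  then obtain f' where f': "\<forall>x\<in>U. (f has_real_derivative f' x) (at x)" "Cn n f' U" by auto
  have "\<forall>x\<in>U. (g has_real_derivative f' x) (at x)"
    using f'(1) Suc.prems(1,2) has_field_derivative_transform_within_open by blast
  then show ?case using f'(2) by auto
qed

lemma Cn_SucD: "Cn (Suc n) f U \<Longrightarrow> Cn n f U"
proof (induction n arbitrary: f)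
  case 0
  then obtain f' where "\<forall>x\<in>U. (f has_real_derivative f' x) (at x)" by auto
  then have "\<forall>x\<in>U. isCont f x" using DERIV_isCont by blast
  then show ?case by (simp add: continuous_at_imp_continuous_on)
next
  case (Suc n)
  then show ?case by auto
qed

lemma Cn_const: "Cn n (\<lambda>x. c) U"
proof (induction n arbitrary: c)
  case (Suc n)
  have "\<forall>x\<in>U. ((\<lambda>x. c) has_real_derivative 0) (at x)" by simp
  then show ?case using Suc[of 0] by (auto intro!: exI[of _ "\<lambda>x. 0"])
qed simp

lemma Cn_id: "Cn n (\<lambda>x. x) U"
proof (cases n)
  case (Suc m)
  have "\<forall>x\<in>U. ((\<lambda>x. x) has_real_derivative 1) (at x)" by simp
  then show ?thesis using Suc Cn_const[of m 1 U] by (auto intro!: exI[of _ "\<lambda>x. 1"])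
qed (simp add: continuous_on_id)

lemma Cn_add: "Cn n f U \<Longrightarrow> Cn n g U \<Longrightarrow> Cn n (\<lambda>x. f x + g x) U"
proof (induction n arbitrary: f g)
  case 0
  then show ?case by (simp add: continuous_on_add)
next
  case (Suc n)
  from Suc.prems obtain f' g' where
    f': "\<forall>x\<in>U. (f has_real_derivative f' x) (at x)" "Cn n f' U" and
    g': "\<forall>x\<in>U. (g has_real_derivative g' x) (at x)" "Cn n g' U" by auto
  have "\<forall>x\<in>U. ((\<lambda>x. f x + g x) has_real_derivative f' x + g' x) (at x)"
    using f' g' by (auto intro: derivative_intros)
  then show ?case using Suc.IH f' g' by auto
qed

lemma Cn_mult: "Cn n f U \<Longrightarrow> Cn n g U \<Longrightarrow> Cn n (\<lambda>x. f x * g x) U"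
proof (induction n arbitrary: f g)
  case 0
  then show ?case by (simp add: continuous_on_mult)
next
  case (Suc n)
  from Suc.prems obtain f' g' where
    f': "\<forall>x\<in>U. (f has_real_derivative f' x) (at x)" "Cn n f' U" and
    g': "\<forall>x\<in>U. (g has_real_derivative g' x) (at x)" "Cn n g' U" by auto
  have "Cn n f U" "Cn n g U" using Suc.prems Cn_SucD by blast+
  then have "Cn n (\<lambda>x. f' x * g x + f x * g' x) U"
    using Suc.IH f' g' Cn_add by blast
  moreover have "\<forall>x\<in>U. ((\<lambda>x. f x * g x) has_real_derivative f' x * g x + f x * g' x) (at x)"
    using f' g' by (auto intro!: derivative_eq_intros)
  ultimately show ?case by auto
qed

lemma Cn_diff: "Cn n f U \<Longrightarrow> Cn n g U \<Longrightarrow> Cn n (\<lambda>x. f x - g x) U"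
  using Cn_add[of n f U "\<lambda>x. -1 * g x"] Cn_mult[OF Cn_const[of n "-1"], of g U] by simp

lemma Cn_sum:
  "finite A \<Longrightarrow> (\<And>k. k \<in> A \<Longrightarrow> Cn n (f k) U) \<Longrightarrow> Cn n (\<lambda>x. \<Sum>k\<in>A. f k x) U"
  by (induction A rule: finite_induct) (simp_all add: Cn_const Cn_add)

lemma Cn_real_polynomial_function: "real_polynomial_function p \<Longrightarrow> Cn n p U"
proof (induction rule: real_polynomial_function.induct)
  case (linear f)
  then obtain c where "f = (\<lambda>x. x * c)" by (auto simp: real_bounded_linear)
  then show ?case using Cn_mult[OF Cn_id Cn_const] by simp
qed (simp_all add: Cn_const Cn_add Cn_mult)

lemma Cn_compose:
  assumes "\<And>x. x \<in> U \<Longrightarrow> g x \<in> V" "open V"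
  shows "Cn n f V \<Longrightarrow> Cn n g U \<Longrightarrow> Cn n (\<lambda>x. f (g x)) U"
proof (induction n arbitrary: f)
  case 0
  then show ?case
    using assms by (simp only: Cn.simps, intro continuous_on_compose2[of V f U g]) auto
next
  case (Suc n)
  from Suc.prems obtain f' g' where
    f': "\<forall>x\<in>V. (f has_real_derivative f' x) (at x)" "Cn n f' V" and
    g': "\<forall>x\<in>U. (g has_real_derivative g' x) (at x)" "Cn n g' U" by auto
  have "Cn n g U" using Suc.prems Cn_SucD by blast
  then have "Cn n (\<lambda>x. f' (g x) * g' x) U"
    using Suc.IH f' g' Cn_mult by blast
  moreover have "((\<lambda>x. f (g x)) has_real_derivative f' (g x) * g' x) (at x)" if "x \<in> U" for x
  proof -
    have "(g has_real_derivative g' x) (at x)" "(f has_real_derivative f' (g x)) (at (g x))"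
      using f'(1) g'(1) assms(1) that by auto
    from DERIV_chain'[OF this] show ?thesis by (simp add: mult.commute)
  qed
  ultimately show ?case by (auto intro!: exI[of _ "\<lambda>x. f' (g x) * g' x"])
qed

lemma Cn_inverse: "Cn n (\<lambda>x. inverse x) {0<..}"
proof (induction n)
  case 0
  then show ?case by (auto intro!: continuous_on_inverse continuous_on_id)
next
  case (Suc n)
  have "\<forall>x\<in>{0<..}. ((\<lambda>x. inverse x) has_real_derivative - (inverse x * inverse x)) (at x)"
    by (auto intro!: derivative_eq_intros simp: power2_eq_square)
  moreover have "Cn n (\<lambda>x. - (inverse x * inverse x)) {0<..}"
    using Cn_mult[OF Cn_const[of n "-1"] Cn_mult[OF Suc Suc]] by simp
  ultimately show ?case by auto
qed

lemma Cn_subset: "Cn n f U \<Longrightarrow> V \<subseteq> U \<Longrightarrow> Cn n f V"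
proof (induction n arbitrary: f)
  case 0
  then show ?case using continuous_on_subset by auto
qed auto

lemma Cn_local:
  assumes "open U" "\<And>x. x \<in> U \<Longrightarrow> \<exists>V. open V \<and> x \<in> V \<and> V \<subseteq> U \<and> Cn n f V"
  shows "Cn n f U"
  using assms(2)
proof (induction n arbitrary: f)
  case 0
  have "\<forall>x\<in>U. isCont f x"
  proof
    fix x assume "x \<in> U"
    then obtain V where "open V" "x \<in> V" "continuous_on V f" using 0 by auto
    then show "isCont f x" using continuous_on_eq_continuous_at by blast
  qed
  then show ?case by (simp add: continuous_at_imp_continuous_on)
next
  case (Suc n)
  have "\<exists>V. open V \<and> x \<in> V \<and> V \<subseteq> U \<and> Cn n (deriv f) V \<and> (f has_real_derivative deriv f x) (at x)"
    if "x \<in> U" for x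
  proof -
    obtain V where V: "open V" "x \<in> V" "V \<subseteq> U" "Cn (Suc n) f V" using Suc.prems \<open>x \<in> U\<close> by blast
    then obtain f' where f': "\<forall>y\<in>V. (f has_real_derivative f' y) (at y)" "Cn n f' V" by auto
    have "\<And>y. y \<in> V \<Longrightarrow> f' y = deriv f y" using f'(1) DERIV_imp_deriv by metis
    then have "Cn n (deriv f) V" using Cn_cong[OF V(1) _ f'(2)] by blast
    moreover have "deriv f x = f' x" using f'(1) V(2) DERIV_imp_deriv by metis
    ultimately show ?thesis using V f' by auto
  qed
  then have "Cn n (deriv f) U" "\<forall>x\<in>U. (f has_real_derivative deriv f x) (at x)"
    using Suc.IH[of "deriv f"] by blast+
  then show ?case by auto
qed

lemma smooth_on_deriv:
  assumes "open U" "smooth_on U f"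
  shows "smooth_on U (deriv f)" and "x \<in> U \<Longrightarrow> (f has_real_derivative deriv f x) (at x)"
proof -
  show "smooth_on U (deriv f)" unfolding smooth_on_def
  proof
    fix n
    from assms(2) have "Cn (Suc n) f U" by (simp add: smooth_on_def)
    then obtain f' where f': "\<forall>y\<in>U. (f has_real_derivative f' y) (at y)" "Cn n f' U" by auto
    then have "\<And>y. y \<in> U \<Longrightarrow> f' y = deriv f y" using DERIV_imp_deriv by metis
    then show "Cn n (deriv f) U" using Cn_cong[OF assms(1) _ f'(2)] by blast
  qed
  assume "x \<in> U"
  from assms(2) have "Cn (Suc 0) f U" by (simp add: smooth_on_def)
  then obtain f' where "\<forall>y\<in>U. (f has_real_derivative f' y) (at y)" by auto
  then show "(f has_real_derivative deriv f x) (at x)" using \<open>x \<in> U\<close> DERIV_imp_deriv by metis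
qed

lemma smooth_on_higher_deriv:
  assumes "open U" "smooth_on U f" "x \<in> U"
  shows "((deriv ^^ k) f has_real_derivative (deriv ^^ Suc k) f x) (at x)"
proof -
  have "smooth_on U ((deriv ^^ k) f)"
    by (induction k) (simp_all add: assms(2) smooth_on_deriv(1)[OF assms(1)])
  then show ?thesis using smooth_on_deriv(2)[OF assms(1) _ assms(3)] by simp
qed

section \<open>Flat functions and a smooth step\<close>

definition flat :: "real poly \<Rightarrow> real \<Rightarrow> real" where
  "flat P x = (if 0 < x then poly P (inverse x) * exp (- inverse x) else 0)"

text \<open>\<open>(P(1/x) e\<^sup>-\<^sup>1\<^sup>/\<^sup>x)' = (1/x)\<^sup>2 (P - P')(1/x) e\<^sup>-\<^sup>1\<^sup>/\<^sup>x\<close>, so the derivative of a flat function is flat.\<close>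

definition flat_deriv_poly :: "real poly \<Rightarrow> real poly" where
  "flat_deriv_poly P = [:0,0,1:] * (P - pderiv P)"

lemma tendsto_poly_times_exp_neg:
  fixes P :: "real poly"
  shows "((\<lambda>t. poly P t * exp (- t)) \<longlongrightarrow> 0) at_top"
proof -
  have eq: "(\<lambda>t. poly P t * exp (- t)) = (\<lambda>t. \<Sum>i\<le>degree P. coeff P i * (t ^ i / exp t))"
    by (simp add: poly_altdef sum_divide_distrib exp_minus field_simps)
  have "((\<lambda>t. \<Sum>i\<le>degree P. coeff P i * (t ^ i / exp t)) \<longlongrightarrow> (\<Sum>i\<le>degree P. coeff P i * 0)) at_top"
    by (intro tendsto_sum tendsto_mult tendsto_const tendsto_power_div_exp_0)
  then show ?thesis unfolding eq by simp
qed

lemma tendsto_flat_at_right_0: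
  fixes P :: "real poly"
  shows "((\<lambda>x. poly P (inverse x) * exp (- inverse x)) \<longlongrightarrow> 0) (at_right 0)"
  using filterlim_compose[OF tendsto_poly_times_exp_neg filterlim_inverse_at_top_right]
  by (simp add: o_def)

lemma flat_has_real_derivative_0: "(flat P has_real_derivative 0) (at 0)"
proof -
  have "((\<lambda>y. (flat P y - flat P 0) / (y - 0)) \<longlongrightarrow> 0) (at_left 0)"
  proof (rule tendsto_eventually)
    show "\<forall>\<^sub>F y in at_left 0. (flat P y - flat P 0) / (y - 0) = 0"
      using eventually_at_left_real[of "-1::real" 0] by (auto elim!: eventually_mono simp: flat_def)
  qed
  moreover have "((\<lambda>y. (flat P y - flat P 0) / (y - 0)) \<longlongrightarrow> 0) (at_right 0)"
  proof (rule Lim_transform_eventually[OF tendsto_flat_at_right_0[of "pCons 0 P"]])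
    show "\<forall>\<^sub>F y in at_right 0. poly (pCons 0 P) (inverse y) * exp (- inverse y)
        = (flat P y - flat P 0) / (y - 0)"
      using eventually_at_right_less[of "0::real"]
      by eventually_elim (auto simp: flat_def field_simps)
  qed
  ultimately have "((\<lambda>y. (flat P y - flat P 0) / (y - 0)) \<longlongrightarrow> 0) (at 0)"
    by (simp add: filterlim_at_split)
  then show ?thesis by (simp add: has_field_derivative_iff)
qed

lemma flat_has_real_derivative: "(flat P has_real_derivative flat (flat_deriv_poly P) x) (at x)"
proof -
  consider "x > 0" | "x < 0" | "x = 0" by linarith
  then show ?thesis
  proof cases
    case 1
    have d1: "((\<lambda>y. poly P (inverse y)) has_real_derivative
        poly (pderiv P) (inverse x) * (- (inverse x ^ 2))) (at x)"
      using DERIV_chain'[OF DERIV_inverse[of x] poly_DERIV[of P "inverse x"]] 1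
      by (simp add: power2_eq_square algebra_simps)
    have d2: "((\<lambda>y. exp (- inverse y)) has_real_derivative exp (- inverse x) * (inverse x ^ 2)) (at x)"
      using 1 by (auto intro!: derivative_eq_intros simp: power2_eq_square)
    have "poly (pderiv P) (inverse x) * (- (inverse x ^ 2)) * exp (- inverse x)
        + poly P (inverse x) * (exp (- inverse x) * (inverse x ^ 2)) = flat (flat_deriv_poly P) x"
      using 1 by (simp add: flat_def flat_deriv_poly_def algebra_simps power2_eq_square)
    with DERIV_mult[OF d1 d2]
    have "((\<lambda>y. poly P (inverse y) * exp (- inverse y)) has_real_derivative
        flat (flat_deriv_poly P) x) (at x)"
      by (simp add: mult.commute)
    then show ?thesis
      using has_field_derivative_transform_within_open[of _ _ x "{0<..}"] 1
      by (auto simp: flat_def)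
  next
    case 2
    have "((\<lambda>y. 0) has_real_derivative 0) (at x)" by simp
    then show ?thesis
      using has_field_derivative_transform_within_open[of "\<lambda>y. 0" 0 x "{..<0}" "flat P"] 2
      by (auto simp: flat_def)
  next
    case 3
    then show ?thesis using flat_has_real_derivative_0 by (simp add: flat_def)
  qed
qed

lemma Cn_flat: "Cn n (flat P) U"
proof (induction n arbitrary: P)
  case 0
  show ?case
    by (simp add: continuous_at_imp_continuous_on DERIV_isCont[OF flat_has_real_derivative])
next
  case (Suc n)
  then show ?case using flat_has_real_derivative by auto
qed

lemma flat_one_pos: "0 < x \<Longrightarrow> 0 < flat 1 x"
  and flat_one_nonneg: "0 \<le> flat 1 x"
  and flat_eq_0: "x \<le> 0 \<Longrightarrow> flat P x = 0"
  by (auto simp: flat_def)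

definition smooth_step :: "real \<Rightarrow> real" where
  "smooth_step x = flat 1 x * inverse (flat 1 x + flat 1 (1 - x))"

lemma smooth_step_eq_0: "x \<le> 0 \<Longrightarrow> smooth_step x = 0"
  by (simp add: smooth_step_def flat_eq_0)

lemma smooth_step_eq_1: "1 \<le> x \<Longrightarrow> smooth_step x = 1"
  using flat_one_pos[of x] flat_eq_0[of "1 - x"] by (simp add: smooth_step_def)

lemma smooth_step_bounds: "0 \<le> smooth_step x" "smooth_step x \<le> 1"
  using flat_one_nonneg[of x] flat_one_nonneg[of "1 - x"]
  by (auto simp: smooth_step_def divide_simps field_simps intro!: mult_nonneg_nonneg)

lemma Cn_smooth_step: "Cn n smooth_step U"
proof -
  have "Cn n (\<lambda>x. flat 1 (1 - x)) UNIV"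
    using Cn_compose[OF _ open_UNIV Cn_flat Cn_diff[OF Cn_const Cn_id]] by blast
  then have den: "Cn n (\<lambda>x. flat 1 x + flat 1 (1 - x)) UNIV"
    using Cn_add[OF Cn_flat] by blast
  have pos: "flat 1 x + flat 1 (1 - x) \<in> {0<..}" for x
  proof (cases "x > 0")
    case True
    then show ?thesis using flat_one_pos[of x] flat_one_nonneg[of "1 - x"] by simp
  next
    case False
    then show ?thesis using flat_one_pos[of "1 - x"] flat_one_nonneg[of x] by simp
  qed
  have "Cn n (\<lambda>x. inverse (flat 1 x + flat 1 (1 - x))) UNIV"
    using Cn_compose[OF pos open_greaterThan Cn_inverse den] .
  then have "Cn n smooth_step UNIV"
    unfolding smooth_step_def[abs_def] using Cn_mult[OF Cn_flat] by blast
  then show ?thesis using Cn_subset by blast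
qed

section \<open>Smooth approximation of continuous functions\<close>

text \<open>\<open>step_bump k\<close> is supported in \<open>(k - 1, k + 1)\<close>, and these bumps telescope to a partition of unity.\<close>

definition step_bump :: "nat \<Rightarrow> real \<Rightarrow> real" where
  "step_bump k u = smooth_step (u + (1 - real k)) - smooth_step (u - real k)"

lemma step_bump_eq_0: "\<not> (real k - 1 < u \<and> u < real k + 1) \<Longrightarrow> step_bump k u = 0"
  by (cases "u \<le> real k - 1") (auto simp: step_bump_def smooth_step_eq_0 smooth_step_eq_1)

lemma abs_step_bump_le: "\<bar>step_bump k u\<bar> \<le> 1"
  using smooth_step_bounds[of "u + (1 - real k)"] smooth_step_bounds[of "u - real k"]
  by (simp add: step_bump_def)

lemma Cn_step_bump: "Cn n (step_bump k) U"
proof -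
  have "Cn n (\<lambda>u. smooth_step (u + c)) U" for c
    by (rule Cn_compose[of U "\<lambda>u. u + c" UNIV]) (auto intro: Cn_smooth_step Cn_add Cn_id Cn_const)
  from this[of "1 - real k"] this[of "- real k"] show ?thesis
    unfolding step_bump_def[abs_def] by (auto dest: Cn_diff)
qed

lemma sum_step_bump:
  assumes "0 \<le> u" "u + 1 \<le> real N"
  shows "(\<Sum>k<N. step_bump k u) = 1"
proof -
  define f where "f n = smooth_step (u + (1 - real n))" for n :: nat
  have "(\<Sum>k<N. step_bump k u) = (\<Sum>k<N. f k - f (Suc k))"
    by (intro sum.cong) (auto simp: step_bump_def f_def algebra_simps)
  also have "\<dots> = f 0 - f N" by (rule sum_lessThan_telescope')
  also have "\<dots> = 1" using assms by (simp add: f_def smooth_step_eq_1 smooth_step_eq_0)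
  finally show ?thesis .
qed

lemma smooth_on_locally_finite_sum:
  assumes smooth: "\<And>k. smooth_on UNIV (a k)"
    and vanish: "\<And>k u. u + 1 \<le> real k \<Longrightarrow> a k u = 0"
  shows "smooth_on UNIV (\<lambda>u. \<Sum>k<nat \<lceil>u\<rceil> + 1. a k u)"
proof -
  have truncate: "(\<Sum>k<N. a k u) = (\<Sum>k<M. a k u)" if "u + 1 \<le> real M" "M \<le> N" for M N u
    by (rule sum.mono_neutral_right) (use that in \<open>auto intro!: vanish\<close>)
  show ?thesis unfolding smooth_on_def
  proof (intro allI Cn_local[OF open_UNIV])
    fix n and x :: real
    define V where "V = {x - 1<..<x + 1}"
    define N where "N = nat \<lceil>x\<rceil> + 2"
    have CnN: "Cn n (\<lambda>u. \<Sum>k<N. a k u) V"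
      using smooth by (intro Cn_sum) (auto simp: smooth_on_def intro: Cn_subset)
    have eq: "(\<Sum>k<N. a k u) = (\<Sum>k<nat \<lceil>u\<rceil> + 1. a k u)" if "u \<in> V" for u
    proof -
      have "u + 1 \<le> real (nat \<lceil>u\<rceil> + 1)" "nat \<lceil>u\<rceil> + 1 \<le> N"
        using that by (auto simp: V_def N_def) linarith+
      then show ?thesis by (rule truncate)
    qed
    have "Cn n (\<lambda>u. \<Sum>k<nat \<lceil>u\<rceil> + 1. a k u) V"
      by (rule Cn_cong[OF _ eq CnN]) (simp add: V_def)
    then show "\<exists>V. open V \<and> x \<in> V \<and> V \<subseteq> UNIV \<and> Cn n (\<lambda>u. \<Sum>k<nat \<lceil>u\<rceil> + 1. a k u) V"
      by (intro exI[of _ V]) (auto simp: V_def)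
  qed
qed

text \<open>At \<open>u\<close> only the bumps with \<open>k = \<lfloor>u\<rfloor>\<close> and \<open>k = \<lfloor>u\<rfloor> + 1\<close> contribute, each with error at most \<open>exp(-u)\<close>.\<close>

lemma step_bump_sum_approx:
  fixes R :: "real \<Rightarrow> real"
  assumes p: "\<And>k x. x \<in> {real k - 1..real k + 1} \<Longrightarrow> \<bar>R x - p k x\<bar> < exp (- (real k + 1))"
    and u: "0 \<le> u" "u + 1 \<le> real N"
  shows "\<bar>(\<Sum>k<N. step_bump k u * p k u) - R u\<bar> \<le> 2 * exp (- u)"
proof -
  define j where "j = nat \<lfloor>u\<rfloor>"
  have term_bound: "\<bar>step_bump k u * (p k u - R u)\<bar> \<le> (if k \<in> {j, Suc j} then exp (- u) else 0)" for k
  proof (cases "real k - 1 < u \<and> u < real k + 1")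
    case True
    have "\<bar>R u - p k u\<bar> < exp (- (real k + 1))" using True by (intro p) auto
    also have "\<dots> \<le> exp (- u)" using True by simp
    finally have "\<bar>step_bump k u * (p k u - R u)\<bar> \<le> 1 * exp (- u)"
      unfolding abs_mult by (intro mult_mono abs_step_bump_le) auto
    moreover have "k \<in> {j, Suc j}" using True u(1) unfolding j_def by (auto, linarith)
    ultimately show ?thesis by simp
  qed (simp add: step_bump_eq_0)
  have "(\<Sum>k<N. step_bump k u * p k u) - R u
      = (\<Sum>k<N. step_bump k u * p k u) - (\<Sum>k<N. step_bump k u) * R u"
    using sum_step_bump[OF u] by simp
  also have "\<dots> = (\<Sum>k<N. step_bump k u * (p k u - R u))"
    by (simp add: sum_distrib_right sum_subtractf right_diff_distrib)
  finally have "\<bar>(\<Sum>k<N. step_bump k u * p k u) - R u\<bar> \<le> (\<Sum>k<N. \<bar>step_bump k u * (p k u - R u)\<bar>)"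
    by (simp add: sum_abs)
  also have "\<dots> \<le> (\<Sum>k<N. if k \<in> {j, Suc j} then exp (- u) else 0)" by (intro sum_mono term_bound)
  also have "\<dots> = (\<Sum>k\<in>{k\<in>{..<N}. k \<in> {j, Suc j}}. exp (- u))"
    by (rule sum.inter_filter[symmetric]) simp
  also have "\<dots> = real (card {k\<in>{..<N}. k \<in> {j, Suc j}}) * exp (- u)" by simp
  also have "\<dots> \<le> 2 * exp (- u)"
  proof -
    have "card {k\<in>{..<N}. k \<in> {j, Suc j}} \<le> card {j, Suc j}" by (rule card_mono) auto
    then show ?thesis by (intro mult_right_mono) auto
  qed
  finally show ?thesis .
qed

lemma smooth_approx_exp_neg:
  fixes R :: "real \<Rightarrow> real"
  assumes "continuous_on UNIV R"
  obtains S where "smooth_on UNIV S" "\<And>u. 0 \<le> u \<Longrightarrow> \<bar>S u - R u\<bar> \<le> 2 * exp (- u)"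
proof -
  have "\<exists>p. real_polynomial_function p \<and>
      (\<forall>x\<in>{real k - 1..real k + 1}. \<bar>R x - p x\<bar> < exp (- (real k + 1)))" for k :: nat
  proof -
    obtain p where "real_polynomial_function p"
      "\<And>x. x \<in> {real k - 1..real k + 1} \<Longrightarrow> \<bar>R x - p x\<bar> < exp (- (real k + 1))"
      using Stone_Weierstrass_real_polynomial_function[of "{real k - 1..real k + 1}" R "exp (- (real k + 1))"]
        continuous_on_subset[OF assms] by auto
    then show ?thesis by blast
  qed
  then obtain p where p: "\<And>k. real_polynomial_function (p k)"
    "\<And>k x. x \<in> {real k - 1..real k + 1} \<Longrightarrow> \<bar>R x - p k x\<bar> < exp (- (real k + 1))"
    by metis
  define S where "S u = (\<Sum>k<nat \<lceil>u\<rceil> + 1. step_bump k u * p k u)" for u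
  have "smooth_on UNIV (\<lambda>u. step_bump k u * p k u)" for k
    unfolding smooth_on_def using Cn_mult[OF Cn_step_bump Cn_real_polynomial_function[OF p(1)]] by blast
  then have "smooth_on UNIV S"
    unfolding S_def by (rule smooth_on_locally_finite_sum) (simp add: step_bump_eq_0)
  moreover have "\<bar>S u - R u\<bar> \<le> 2 * exp (- u)" if "0 \<le> u" for u
  proof -
    have "u + 1 \<le> real (nat \<lceil>u\<rceil> + 1)" by linarith
    from step_bump_sum_approx[OF p(2) that this] show ?thesis by (simp add: S_def)
  qed
  ultimately show ?thesis using that by blast
qed

text \<open>The substitution \<open>u = 1/x\<close> turns the error \<open>2 exp(-u)\<close> into one that is flat at \<open>0\<close>.\<close>

lemma smooth_approx_flat_error:
  fixes r :: "real \<Rightarrow> real"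
  assumes "continuous_on {0<..1} r"
  obtains A where "smooth_on {0<..} A" "\<And>x. x \<in> {0<..1} \<Longrightarrow> \<bar>A x - r x\<bar> \<le> 2 * exp (- inverse x)"
proof -
  define R where "R u = r (inverse (max u 1))" for u
  have "continuous_on UNIV R"
    unfolding R_def
    by (rule continuous_on_compose2[OF assms]) (auto intro!: continuous_intros simp: field_simps)
  then obtain S where S: "smooth_on UNIV S" "\<And>u. 0 \<le> u \<Longrightarrow> \<bar>S u - R u\<bar> \<le> 2 * exp (- u)"
    using smooth_approx_exp_neg by blast
  have "smooth_on {0<..} (\<lambda>x. S (inverse x))"
    unfolding smooth_on_def
  proof
    fix n
    show "Cn n (\<lambda>x. S (inverse x)) {0<..}"
      using Cn_compose[of "{0<..}" inverse UNIV n S] Cn_inverse S(1) by (auto simp: smooth_on_def)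
  qed
  moreover have "\<bar>S (inverse x) - r x\<bar> \<le> 2 * exp (- inverse x)" if "x \<in> {0<..1}" for x
  proof -
    have "max (inverse x) 1 = inverse x" using that by (auto simp: field_simps)
    then have "R (inverse x) = r x" using that by (simp add: R_def)
    then show ?thesis using S(2)[of "inverse x"] that by simp
  qed
  ultimately show ?thesis using that by blast
qed

section \<open>Moderate and negligible nets\<close>

lemma negligible_add:
  assumes "Defs.negligible x" "Defs.negligible y"
  shows "Defs.negligible (\<lambda>e. x e + y e)"
  unfolding Defs.negligible_def
proof
  fix m
  obtain C1 where 1: "\<forall>\<^sub>F e in at_right 0. norm (x e) \<le> C1 * e ^ m"
    using assms(1) Defs.negligible_def by blast
  obtain C2 where 2: "\<forall>\<^sub>F e in at_right 0. norm (y e) \<le> C2 * e ^ m"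
    using assms(2) Defs.negligible_def by blast
  have "\<forall>\<^sub>F e in at_right 0. norm (x e + y e) \<le> (C1 + C2) * e ^ m"
    using 1 2 by eventually_elim (auto simp: algebra_simps intro: order_trans[OF norm_triangle_ineq])
  then show "\<exists>C. \<forall>\<^sub>F e in at_right 0. norm (x e + y e) \<le> C * e ^ m" by blast
qed

lemma negligible_diff:
  assumes "Defs.negligible x" "Defs.negligible y"
  shows "Defs.negligible (\<lambda>e. x e - y e)"
proof -
  have "Defs.negligible (\<lambda>e. - y e)"
    using assms(2) unfolding Defs.negligible_def by simp
  from negligible_add[OF assms(1) this] show ?thesis by simp
qed

lemma negligible_mult_moderate:
  assumes "Defs.negligible x" "moderate y"
  shows "Defs.negligible (\<lambda>e. x e * y e)"
  unfolding Defs.negligible_def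
proof
  fix m
  obtain N C' where y: "\<forall>\<^sub>F e in at_right 0. norm (y e) \<le> C' * (1 / e) ^ N"
    using assms(2) moderate_def by blast
  obtain C where x: "\<forall>\<^sub>F e in at_right 0. norm (x e) \<le> C * e ^ (m + N)"
    using assms(1) Defs.negligible_def by blast
  have "\<forall>\<^sub>F e in at_right 0. norm (x e * y e) \<le> (C * C') * e ^ m"
    using x y eventually_at_right_less[of "0::real"]
  proof eventually_elim
    case (elim e)
    have "norm (x e * y e) \<le> (C * e ^ (m + N)) * (C' * (1 / e) ^ N)"
      unfolding norm_mult using elim by (intro mult_mono) (auto intro: order_trans[OF norm_ge_zero])
    also have "\<dots> = (C * C') * e ^ m"
      using elim by (simp add: power_add field_simps)
    finally show ?case .
  qed
  then show "\<exists>C. \<forall>\<^sub>F e in at_right 0. norm (x e * y e) \<le> C * e ^ m" by blast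
qed

lemma negligible_imp_moderate: "Defs.negligible x \<Longrightarrow> moderate x"
proof -
  assume "Defs.negligible x"
  then obtain C where "\<forall>\<^sub>F e in at_right 0. norm (x e) \<le> C * e ^ 0"
    unfolding Defs.negligible_def by blast
  then have "\<forall>\<^sub>F e in at_right 0. norm (x e) \<le> C * (1 / e) ^ 0" by simp
  then show "moderate x" unfolding moderate_def by blast
qed

lemma moderate_add_negligible:
  assumes "moderate r" "Defs.negligible d"
  shows "moderate (\<lambda>e. r e + d e)"
proof -
  obtain N C1 where 1: "\<forall>\<^sub>F e in at_right 0. norm (r e) \<le> C1 * (1 / e) ^ N"
    using assms(1) moderate_def by blast
  obtain C2 where 2: "\<forall>\<^sub>F e in at_right 0. norm (d e) \<le> C2 * e ^ 0"
    using assms(2) Defs.negligible_def by blast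
  have "\<forall>\<^sub>F e in at_right 0. norm (r e + d e) \<le> (\<bar>C1\<bar> + \<bar>C2\<bar>) * (1 / e) ^ N"
    using 1 2 eventually_at_right_real[OF zero_less_one]
  proof eventually_elim
    case (elim e)
    then have ge1: "1 \<le> (1 / e) ^ N" by (intro one_le_power) (auto simp: field_simps)
    have "norm (r e + d e) \<le> norm (r e) + norm (d e)" by (rule norm_triangle_ineq)
    also have "\<dots> \<le> \<bar>C1\<bar> * (1 / e) ^ N + \<bar>C2\<bar> * (1 / e) ^ N"
    proof (intro add_mono)
      show "norm (r e) \<le> \<bar>C1\<bar> * (1 / e) ^ N"
        using elim(1) by (rule order_trans) (intro mult_right_mono, use elim(3) in auto)
      have "norm (d e) \<le> \<bar>C2\<bar>" using elim(2) by simp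
      also have "\<dots> \<le> \<bar>C2\<bar> * (1 / e) ^ N" using ge1 by (simp add: mult_le_cancel_left1)
      finally show "norm (d e) \<le> \<bar>C2\<bar> * (1 / e) ^ N" .
    qed
    finally show ?case by (simp add: algebra_simps)
  qed
  then show ?thesis unfolding moderate_def by blast
qed

lemma negligible_if_exp_bound:
  assumes "\<And>e. e \<in> I_eps \<Longrightarrow> norm (d e) \<le> C * exp (- inverse e)"
  shows "Defs.negligible d"
  unfolding Defs.negligible_def
proof
  fix m :: nat
  have lim: "((\<lambda>e. inverse e ^ m / exp (inverse e)) \<longlongrightarrow> 0) (at_right (0::real))"
    using filterlim_compose[OF tendsto_power_div_exp_0[of m] filterlim_inverse_at_top_right]
    by (simp add: o_def)
  have "\<forall>\<^sub>F e in at_right 0. norm (d e) \<le> \<bar>C\<bar> * e ^ m"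
    using order_tendstoD(2)[OF lim zero_less_one] eventually_at_right_real[OF zero_less_one]
  proof eventually_elim
    case (elim e)
    then have e: "0 < e" "e < 1" by auto
    have "inverse e ^ m < exp (inverse e)" using elim(1) by (simp add: divide_less_eq)
    then have "inverse (exp (inverse e)) < inverse (inverse e ^ m)"
      using e by (intro less_imp_inverse_less) auto
    then have exp_le: "exp (- inverse e) \<le> e ^ m" by (simp add: exp_minus power_inverse)
    have "norm (d e) \<le> C * exp (- inverse e)" using assms e by (auto simp: I_eps_def)
    also have "\<dots> \<le> \<bar>C\<bar> * exp (- inverse e)" by (intro mult_right_mono) auto
    also have "\<dots> \<le> \<bar>C\<bar> * e ^ m" using exp_le by (intro mult_left_mono) auto
    finally show ?case .
  qed
  then show "\<exists>C. \<forall>\<^sub>F e in at_right 0. norm (d e) \<le> C * e ^ m" by blast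
qed

section \<open>Smooth nets\<close>

lemma smooth_on_I_cong:
  assumes "smooth_on_I f" "\<And>e. e \<in> I_eps \<Longrightarrow> f e = g e"
  shows "smooth_on_I g"
proof -
  obtain D where "\<forall>e\<in>I_eps. D 0 e = f e"
    "\<forall>n. \<forall>e\<in>I_eps. (D n has_vector_derivative D (Suc n) e) (at e within I_eps)"
    using assms(1) unfolding smooth_on_I_def by blast
  then show ?thesis unfolding smooth_on_I_def using assms(2) by (intro exI[of _ D]) simp
qed

lemma smooth_on_I_imp_continuous_on: "smooth_on_I r \<Longrightarrow> continuous_on I_eps r"
proof -
  assume "smooth_on_I r"
  then obtain D where D: "\<forall>e\<in>I_eps. D 0 e = r e"
    "\<forall>n. \<forall>e\<in>I_eps. (D n has_vector_derivative D (Suc n) e) (at e within I_eps)"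
    unfolding smooth_on_I_def by blast
  have "continuous_on I_eps (D 0)"
    using D(2) by (intro continuous_on_vector_derivative) auto
  then show ?thesis using D(1) continuous_on_cong by force
qed

lemma smooth_on_I_add: "smooth_on_I r \<Longrightarrow> smooth_on_I s \<Longrightarrow> smooth_on_I (\<lambda>e. r e + s e)"
proof -
  assume "smooth_on_I r" "smooth_on_I s"
  then obtain D E where D: "\<forall>e\<in>I_eps. D 0 e = r e"
    "\<forall>n. \<forall>e\<in>I_eps. (D n has_vector_derivative D (Suc n) e) (at e within I_eps)"
    and E: "\<forall>e\<in>I_eps. E 0 e = s e"
    "\<forall>n. \<forall>e\<in>I_eps. (E n has_vector_derivative E (Suc n) e) (at e within I_eps)"
    unfolding smooth_on_I_def by blast
  show ?thesis unfolding smooth_on_I_def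
    by (rule exI[of _ "\<lambda>n e. D n e + E n e"]) (use D E in \<open>auto intro: has_vector_derivative_add\<close>)
qed

lemma smooth_on_I_mult_left: "smooth_on_I r \<Longrightarrow> smooth_on_I (\<lambda>e. c * r e)"
proof -
  assume "smooth_on_I r"
  then obtain D where D: "\<forall>e\<in>I_eps. D 0 e = r e"
    "\<forall>n. \<forall>e\<in>I_eps. (D n has_vector_derivative D (Suc n) e) (at e within I_eps)"
    unfolding smooth_on_I_def by blast
  show ?thesis unfolding smooth_on_I_def
    by (rule exI[of _ "\<lambda>n e. c * D n e"]) (use D in \<open>auto intro: has_vector_derivative_mult_right\<close>)
qed

lemma smooth_on_I_diff: "smooth_on_I r \<Longrightarrow> smooth_on_I s \<Longrightarrow> smooth_on_I (\<lambda>e. r e - s e)"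
  using smooth_on_I_add[OF _ smooth_on_I_mult_left[of s "-1"]] by simp

lemma smooth_on_I_const: "smooth_on_I (\<lambda>e. if e \<in> I_eps then c else 0)"
  unfolding smooth_on_I_def by (rule exI[of _ "\<lambda>n e. if n = 0 then c else 0"]) auto

lemma smooth_on_I_of_real:
  assumes "smooth_on {0<..} A"
  shows "smooth_on_I (\<lambda>e. of_real (A e) :: 'k::real_normed_field)"
  unfolding smooth_on_I_def
proof (intro exI[of _ "\<lambda>n e. of_real ((deriv ^^ n) A e)"] conjI ballI allI)
  fix n e assume "e \<in> I_eps"
  then have "((deriv ^^ n) A has_real_derivative (deriv ^^ Suc n) A e) (at e)"
    using smooth_on_higher_deriv[OF open_greaterThan assms] by (simp add: I_eps_def)
  then show "((\<lambda>e. of_real ((deriv ^^ n) A e) :: 'k) has_vector_derivative of_real ((deriv ^^ Suc n) A e))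
      (at e within I_eps)"
    by (rule has_vector_derivative_of_real[OF has_field_derivative_at_within])
qed simp

lemma EM_sm_representative:
  assumes "smooth_on_I s" "r \<in> EM_co"
    and close: "\<And>e. e \<in> I_eps \<Longrightarrow> norm (s e - r e) \<le> C * exp (- inverse e)"
  shows "\<exists>s'\<in>EM_sm. (\<lambda>e. s' e - r e) \<in> N_co"
proof -
  define s' where "s' e = (if e \<in> I_eps then s e else 0)" for e
  have r: "net r" "moderate r" "continuous_on I_eps r" using assms(2) by (auto simp: EM_co_def)
  have smooth: "smooth_on_I s'" using assms(1) by (rule smooth_on_I_cong) (simp add: s'_def)
  have negl: "Defs.negligible (\<lambda>e. s' e - r e)"
    by (rule negligible_if_exp_bound) (use close in \<open>simp add: s'_def\<close>)
  have "moderate s'" using moderate_add_negligible[OF r(2) negl] by simp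
  then have "s' \<in> EM_sm" using smooth by (simp add: EM_sm_def net_def s'_def)
  moreover have "(\<lambda>e. s' e - r e) \<in> N_co"
    using r negl smooth_on_I_imp_continuous_on[OF smooth]
    by (auto simp: N_co_def net_def s'_def intro: continuous_on_diff)
  ultimately show ?thesis by blast
qed

lemma EM_co_approx_real:
  assumes "r \<in> (EM_co :: (real \<Rightarrow> real) set)"
  shows "\<exists>s\<in>EM_sm. (\<lambda>e. s e - r e) \<in> N_co"
proof -
  have "continuous_on {0<..1} r" using assms by (simp add: EM_co_def I_eps_def)
  then obtain A where A: "smooth_on {0<..} A"
    "\<And>x. x \<in> {0<..1} \<Longrightarrow> \<bar>A x - r x\<bar> \<le> 2 * exp (- inverse x)"
    using smooth_approx_flat_error by blast
  show ?thesis
    using EM_sm_representative[OF smooth_on_I_of_real[OF A(1)] assms, of 2] A(2)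
    by (simp add: I_eps_def)
qed

lemma EM_co_approx_complex:
  assumes "r \<in> (EM_co :: (real \<Rightarrow> complex) set)"
  shows "\<exists>s\<in>EM_sm. (\<lambda>e. s e - r e) \<in> N_co"
proof -
  have r: "continuous_on {0<..1} r" using assms by (simp add: EM_co_def I_eps_def)
  have "continuous_on {0<..1} (\<lambda>e. Re (r e))" using r by (intro continuous_intros)
  then obtain A where A: "smooth_on {0<..} A"
    "\<And>x. x \<in> {0<..1} \<Longrightarrow> \<bar>A x - Re (r x)\<bar> \<le> 2 * exp (- inverse x)"
    using smooth_approx_flat_error by blast
  have "continuous_on {0<..1} (\<lambda>e. Im (r e))" using r by (intro continuous_intros)
  then obtain B where B: "smooth_on {0<..} B"
    "\<And>x. x \<in> {0<..1} \<Longrightarrow> \<bar>B x - Im (r x)\<bar> \<le> 2 * exp (- inverse x)"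
    using smooth_approx_flat_error by blast
  define s where "s e = complex_of_real (A e) + \<i> * complex_of_real (B e)" for e
  have "smooth_on_I s"
    unfolding s_def
    using smooth_on_I_add[OF smooth_on_I_of_real[OF A(1)] smooth_on_I_mult_left[OF smooth_on_I_of_real[OF B(1)]]] .
  moreover have "norm (s e - r e) \<le> 4 * exp (- inverse e)" if "e \<in> I_eps" for e
  proof -
    have "norm (s e - r e) \<le> \<bar>A e - Re (r e)\<bar> + \<bar>B e - Im (r e)\<bar>"
      using cmod_le[of "s e - r e"] by (simp add: s_def)
    also have "\<dots> \<le> 4 * exp (- inverse e)"
      using A(2)[of e] B(2)[of e] that by (simp add: I_eps_def)
    finally show ?thesis .
  qed
  ultimately show ?thesis using EM_sm_representative[OF _ assms] by blast
qed

section \<open>The quotient rings\<close>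

abbreviation class_co :: "(real \<Rightarrow> 'k::real_normed_field) \<Rightarrow> (real \<Rightarrow> 'k) set" where
  "class_co r \<equiv> N_co +>\<^bsub>net_ring EM_co\<^esub> r"

abbreviation class_sm :: "(real \<Rightarrow> 'k::real_normed_field) \<Rightarrow> (real \<Rightarrow> 'k) set" where
  "class_sm r \<equiv> N_sm +>\<^bsub>net_ring EM_sm\<^esub> r"

lemma net_ring_coset_eq: "H +>\<^bsub>net_ring S\<^esub> a = {z. (\<lambda>e. z e - a e) \<in> H}"
proof (rule Set.set_eqI)
  fix z
  show "z \<in> H +>\<^bsub>net_ring S\<^esub> a \<longleftrightarrow> z \<in> {z. (\<lambda>e. z e - a e) \<in> H}"
  proof
    assume "z \<in> H +>\<^bsub>net_ring S\<^esub> a"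
    then obtain h where "h \<in> H" "z = (\<lambda>e. h e + a e)"
      by (auto simp: a_r_coset_def r_coset_def net_ring_def)
    then show "z \<in> {z. (\<lambda>e. z e - a e) \<in> H}" by simp
  next
    assume "z \<in> {z. (\<lambda>e. z e - a e) \<in> H}"
    moreover have "z = (\<lambda>e. (\<lambda>e. z e - a e) e + a e)" by simp
    ultimately show "z \<in> H +>\<^bsub>net_ring S\<^esub> a"
      unfolding a_r_coset_def r_coset_def net_ring_def by (auto intro!: bexI[of _ "\<lambda>e. z e - a e"])
  qed
qed

lemma net_ring_coset_eq_if_diff_mem:
  assumes add: "\<And>x y. x \<in> H \<Longrightarrow> y \<in> H \<Longrightarrow> (\<lambda>e. x e + y e) \<in> H"
    and diff: "\<And>x y. x \<in> H \<Longrightarrow> y \<in> H \<Longrightarrow> (\<lambda>e. x e - y e) \<in> H"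
    and yr: "(\<lambda>e. y e - r e) \<in> H"
  shows "H +>\<^bsub>net_ring S\<^esub> y = H +>\<^bsub>net_ring S\<^esub> (r :: real \<Rightarrow> 'k::real_normed_field)"
  unfolding net_ring_coset_eq
proof (rule Set.set_eqI, rule iffI)
  fix z assume "z \<in> {z. (\<lambda>e. z e - y e) \<in> H}"
  then have "(\<lambda>e. (\<lambda>e. z e - y e) e + (\<lambda>e. y e - r e) e) \<in> H" using add yr by blast
  then show "z \<in> {z. (\<lambda>e. z e - r e) \<in> H}" by simp
next
  fix z assume "z \<in> {z. (\<lambda>e. z e - r e) \<in> H}"
  then have "(\<lambda>e. (\<lambda>e. z e - r e) e - (\<lambda>e. y e - r e) e) \<in> H" using diff yr by blast
  then show "z \<in> {z. (\<lambda>e. z e - y e) \<in> H}" by simp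
qed

lemma carrier_net_ring_Quot: "carrier (net_ring S Quot N) = (\<lambda>a. N +>\<^bsub>net_ring S\<^esub> a) ` S"
  by (auto simp: FactRing_def A_RCOSETS_def' net_ring_def)

lemma N_co_zero: "(\<lambda>e. 0) \<in> N_co"
  by (auto simp: N_co_def net_def Defs.negligible_def intro!: exI[of _ 0])

lemma N_co_add: "x \<in> N_co \<Longrightarrow> y \<in> N_co \<Longrightarrow> (\<lambda>e. x e + y e) \<in> N_co"
  by (auto simp: N_co_def net_def negligible_add continuous_on_add)

lemma N_co_diff: "x \<in> N_co \<Longrightarrow> y \<in> N_co \<Longrightarrow> (\<lambda>e. x e - y e) \<in> N_co"
  by (auto simp: N_co_def net_def negligible_diff continuous_on_diff)

lemma N_co_mult: "x \<in> N_co \<Longrightarrow> y \<in> EM_co \<Longrightarrow> (\<lambda>e. x e * y e) \<in> N_co"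
  by (auto simp: N_co_def EM_co_def net_def negligible_mult_moderate continuous_on_mult)

lemma N_co_subset_EM_co: "N_co \<subseteq> EM_co"
  by (auto simp: N_co_def EM_co_def negligible_imp_moderate)

lemma N_sm_zero: "(\<lambda>e. 0) \<in> N_sm"
  using smooth_on_I_const[of 0]
  by (auto simp: N_sm_def net_def Defs.negligible_def intro!: exI[of _ 0])

lemma N_sm_add: "x \<in> N_sm \<Longrightarrow> y \<in> N_sm \<Longrightarrow> (\<lambda>e. x e + y e) \<in> N_sm"
  by (auto simp: N_sm_def net_def negligible_add smooth_on_I_add)

lemma N_sm_diff: "x \<in> N_sm \<Longrightarrow> y \<in> N_sm \<Longrightarrow> (\<lambda>e. x e - y e) \<in> N_sm"
  by (auto simp: N_sm_def net_def negligible_diff smooth_on_I_diff)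

lemma N_sm_subset_N_co: "N_sm \<subseteq> N_co"
  by (auto simp: N_sm_def N_co_def smooth_on_I_imp_continuous_on)

lemma EM_sm_subset_EM_co: "EM_sm \<subseteq> EM_co"
  by (auto simp: EM_sm_def EM_co_def smooth_on_I_imp_continuous_on)

lemma N_sm_eq_N_co_smooth: "N_sm = {x \<in> N_co. smooth_on_I x}"
  by (auto simp: N_sm_def N_co_def smooth_on_I_imp_continuous_on)

lemma mem_class_co: "z \<in> class_co r \<longleftrightarrow> (\<lambda>e. z e - r e) \<in> N_co"
  by (simp add: net_ring_coset_eq)

lemma mem_class_sm: "z \<in> class_sm r \<longleftrightarrow> (\<lambda>e. z e - r e) \<in> N_sm"
  by (simp add: net_ring_coset_eq)

lemma class_co_self: "r \<in> class_co r"
  using N_co_zero by (simp add: mem_class_co)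

lemma class_sm_self: "r \<in> class_sm r"
  using N_sm_zero by (simp add: mem_class_sm)

lemma class_co_eq: "(\<lambda>e. y e - r e) \<in> N_co \<Longrightarrow> class_co y = class_co r"
  by (rule net_ring_coset_eq_if_diff_mem) (auto intro: N_co_add N_co_diff)

lemma class_sm_eq: "(\<lambda>e. y e - r e) \<in> N_sm \<Longrightarrow> class_sm y = class_sm r"
  by (rule net_ring_coset_eq_if_diff_mem) (auto intro: N_sm_add N_sm_diff)

lemma N_co_mult_diff:
  assumes "r \<in> EM_co" "s \<in> EM_co" "(\<lambda>e. a e - r e) \<in> N_co" "(\<lambda>e. b e - s e) \<in> N_co"
  shows "(\<lambda>e. a e * b e - r e * s e) \<in> N_co"
proof -
  define x y where "x = (\<lambda>e. a e - r e)" and "y = (\<lambda>e. b e - s e)"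
  have "x \<in> N_co" "y \<in> N_co" using assms by (auto simp: x_def y_def)
  then have "(\<lambda>e. (x e * y e + x e * s e) + y e * r e) \<in> N_co"
    using N_co_add[OF N_co_add[OF N_co_mult N_co_mult] N_co_mult] N_co_subset_EM_co assms(1,2)
    by blast
  moreover have "(\<lambda>e. (x e * y e + x e * s e) + y e * r e) = (\<lambda>e. a e * b e - r e * s e)"
    by (auto simp: x_def y_def algebra_simps)
  ultimately show ?thesis by simp
qed

lemma class_co_mult:
  assumes "r \<in> EM_co" "s \<in> EM_co"
  shows "class_co r \<otimes>\<^bsub>K_co\<^esub> class_co s = class_co (\<lambda>e. r e * s e)"
proof -
  have "class_co r \<otimes>\<^bsub>K_co\<^esub> class_co s
      = (\<Union>a\<in>class_co r. \<Union>b\<in>class_co s. class_co (\<lambda>e. a e * b e))"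
    by (simp add: K_co_def FactRing_def rcoset_mult_def net_ring_def)
  also have "\<dots> = class_co (\<lambda>e. r e * s e)"
  proof -
    have "class_co (\<lambda>e. a e * b e) = class_co (\<lambda>e. r e * s e)"
      if "a \<in> class_co r" "b \<in> class_co s" for a b
      using that assms by (intro class_co_eq N_co_mult_diff) (auto simp: mem_class_co)
    then show ?thesis using class_co_self[of r] class_co_self[of s] by blast
  qed
  finally show ?thesis .
qed

lemma class_co_add: "class_co r \<oplus>\<^bsub>K_co\<^esub> class_co s = class_co (\<lambda>e. r e + s e)"
proof -
  have "class_co r \<oplus>\<^bsub>K_co\<^esub> class_co s = (\<Union>a\<in>class_co r. \<Union>b\<in>class_co s. {\<lambda>e. a e + b e})"
    by (simp add: K_co_def FactRing_def set_add_def' net_ring_def)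
  also have "\<dots> = class_co (\<lambda>e. r e + s e)"
  proof (rule Set.set_eqI, rule iffI)
    fix z assume "z \<in> (\<Union>a\<in>class_co r. \<Union>b\<in>class_co s. {\<lambda>e. a e + b e})"
    then obtain a b where "(\<lambda>e. a e - r e) \<in> N_co" "(\<lambda>e. b e - s e) \<in> N_co" "z = (\<lambda>e. a e + b e)"
      by (auto simp: mem_class_co)
    moreover from N_co_add[OF this(1,2)] have "(\<lambda>e. (a e - r e) + (b e - s e)) \<in> N_co" .
    ultimately show "z \<in> class_co (\<lambda>e. r e + s e)" by (simp add: mem_class_co algebra_simps)
  next
    fix z assume "z \<in> class_co (\<lambda>e. r e + s e)"
    then have "(\<lambda>e. z e - s e) \<in> class_co r" by (simp add: mem_class_co algebra_simps)
    moreover have "z = (\<lambda>e. (\<lambda>e. z e - s e) e + s e)" by simp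
    ultimately show "z \<in> (\<Union>a\<in>class_co r. \<Union>b\<in>class_co s. {\<lambda>e. a e + b e})"
      using class_co_self[of s] by blast
  qed
  finally show ?thesis .
qed

section \<open>The map \<open>\<tau>_sm\<close>\<close>

lemma tau_sm_eq_class_co:
  assumes "Y \<noteq> {}" "\<And>y. y \<in> Y \<Longrightarrow> (\<lambda>e. y e - r e) \<in> N_co"
  shows "tau_sm Y = class_co r"
proof -
  have "class_co y = class_co r" if "y \<in> Y" for y using assms(2) that class_co_eq by blast
  then show ?thesis using assms(1) unfolding tau_sm_def by auto
qed

lemma tau_sm_class_sm: "tau_sm (class_sm r) = class_co r"
proof (rule tau_sm_eq_class_co)
  show "class_sm r \<noteq> {}" using class_sm_self by blast
qed (use N_sm_subset_N_co in \<open>auto simp: mem_class_sm\<close>)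

lemma tau_sm_mult_class_sm:
  assumes "r \<in> EM_sm" "s \<in> EM_sm"
  shows "tau_sm (class_sm r \<otimes>\<^bsub>K_sm\<^esub> class_sm s) = class_co (\<lambda>e. r e * s e)"
proof -
  have eq: "class_sm r \<otimes>\<^bsub>K_sm\<^esub> class_sm s
      = (\<Union>a\<in>class_sm r. \<Union>b\<in>class_sm s. class_sm (\<lambda>e. a e * b e))"
    by (simp add: K_sm_def FactRing_def rcoset_mult_def net_ring_def)
  show ?thesis
  proof (rule tau_sm_eq_class_co)
    show "class_sm r \<otimes>\<^bsub>K_sm\<^esub> class_sm s \<noteq> {}"
      unfolding eq using class_sm_self by blast
  next
    fix z assume "z \<in> class_sm r \<otimes>\<^bsub>K_sm\<^esub> class_sm s"
    then obtain a b where ab: "a \<in> class_sm r" "b \<in> class_sm s" "(\<lambda>e. z e - a e * b e) \<in> N_sm"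
      unfolding eq by (auto simp: mem_class_sm)
    have "(\<lambda>e. a e - r e) \<in> N_co" "(\<lambda>e. b e - s e) \<in> N_co"
      using ab N_sm_subset_N_co by (auto simp: mem_class_sm)
    then have "(\<lambda>e. a e * b e - r e * s e) \<in> N_co"
      using N_co_mult_diff assms EM_sm_subset_EM_co by blast
    then have "(\<lambda>e. (z e - a e * b e) + (a e * b e - r e * s e)) \<in> N_co"
      using N_co_add ab(3) N_sm_subset_N_co by blast
    then show "(\<lambda>e. z e - r e * s e) \<in> N_co" by simp
  qed
qed

lemma tau_sm_add_class_sm:
  "tau_sm (class_sm r \<oplus>\<^bsub>K_sm\<^esub> class_sm s) = class_co (\<lambda>e. r e + s e)"
proof -
  have eq: "class_sm r \<oplus>\<^bsub>K_sm\<^esub> class_sm s = (\<Union>a\<in>class_sm r. \<Union>b\<in>class_sm s. {\<lambda>e. a e + b e})"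
    by (simp add: K_sm_def FactRing_def set_add_def' net_ring_def)
  show ?thesis
  proof (rule tau_sm_eq_class_co)
    show "class_sm r \<oplus>\<^bsub>K_sm\<^esub> class_sm s \<noteq> {}"
      unfolding eq using class_sm_self by blast
  next
    fix z assume "z \<in> class_sm r \<oplus>\<^bsub>K_sm\<^esub> class_sm s"
    then obtain a b where ab: "a \<in> class_sm r" "b \<in> class_sm s" "z = (\<lambda>e. a e + b e)"
      unfolding eq by auto
    have "(\<lambda>e. a e - r e) \<in> N_co" "(\<lambda>e. b e - s e) \<in> N_co"
      using ab N_sm_subset_N_co by (auto simp: mem_class_sm)
    from N_co_add[OF this] show "(\<lambda>e. z e - (r e + s e)) \<in> N_co"
      by (simp add: ab algebra_simps)
  qed
qed

lemma tau_sm_ring_hom: "tau_sm \<in> ring_hom (K_sm :: (real \<Rightarrow> 'k::real_normed_field) set ring) K_co"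
proof (rule ring_hom_memI)
  have carrier_sm: "carrier (K_sm :: (real \<Rightarrow> 'k) set ring) = class_sm ` EM_sm"
    unfolding K_sm_def by (rule carrier_net_ring_Quot)
  fix x y :: "(real \<Rightarrow> 'k) set" assume "x \<in> carrier K_sm" "y \<in> carrier K_sm"
  then obtain r s where r: "r \<in> EM_sm" "x = class_sm r" and s: "s \<in> EM_sm" "y = class_sm s"
    using carrier_sm by auto
  have "r \<in> EM_co" "s \<in> EM_co" using r(1) s(1) EM_sm_subset_EM_co by auto
  then show "tau_sm x \<in> carrier K_co"
    by (auto simp: r(2) tau_sm_class_sm K_co_def carrier_net_ring_Quot)
  show "tau_sm (x \<otimes>\<^bsub>K_sm\<^esub> y) = tau_sm x \<otimes>\<^bsub>K_co\<^esub> tau_sm y"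
    using r s \<open>r \<in> EM_co\<close> \<open>s \<in> EM_co\<close>
    by (simp add: tau_sm_mult_class_sm tau_sm_class_sm class_co_mult)
  show "tau_sm (x \<oplus>\<^bsub>K_sm\<^esub> y) = tau_sm x \<oplus>\<^bsub>K_co\<^esub> tau_sm y"
    using r s by (simp add: tau_sm_add_class_sm tau_sm_class_sm class_co_add)
next
  show "tau_sm \<one>\<^bsub>(K_sm :: (real \<Rightarrow> 'k) set ring)\<^esub> = \<one>\<^bsub>(K_co :: (real \<Rightarrow> 'k) set ring)\<^esub>"
    using tau_sm_class_sm by (simp add: K_sm_def K_co_def FactRing_def net_ring_def)
qed

lemma inj_on_tau_sm: "inj_on tau_sm (carrier (K_sm :: (real \<Rightarrow> 'k::real_normed_field) set ring))"
proof (rule inj_onI)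
  fix x y :: "(real \<Rightarrow> 'k) set"
  assume "x \<in> carrier K_sm" "y \<in> carrier K_sm" and eq: "tau_sm x = tau_sm y"
  then obtain r s where r: "r \<in> EM_sm" "x = class_sm r" and s: "s \<in> EM_sm" "y = class_sm s"
    by (auto simp: K_sm_def carrier_net_ring_Quot)
  have "class_co r = class_co s" using eq r s by (simp add: tau_sm_class_sm)
  then have "(\<lambda>e. r e - s e) \<in> N_co" using class_co_self[of r] by (simp add: mem_class_co)
  moreover have "smooth_on_I (\<lambda>e. r e - s e)" using r s by (auto simp: EM_sm_def intro: smooth_on_I_diff)
  ultimately have "(\<lambda>e. r e - s e) \<in> N_sm" by (simp add: N_sm_eq_N_co_smooth)
  then show "x = y" using r s by (simp add: class_sm_eq)
qed

lemma tau_sm_ring_iso: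
  assumes approx: "\<And>r. r \<in> (EM_co :: (real \<Rightarrow> 'k::real_normed_field) set) \<Longrightarrow>
      \<exists>s\<in>EM_sm. (\<lambda>e. s e - r e) \<in> N_co"
  shows "(tau_sm :: (real \<Rightarrow> 'k) set \<Rightarrow> _) \<in> ring_iso K_sm K_co"
proof -
  have "carrier (K_co :: (real \<Rightarrow> 'k) set ring) \<subseteq> tau_sm ` carrier K_sm"
  proof
    fix x :: "(real \<Rightarrow> 'k) set" assume "x \<in> carrier K_co"
    then obtain r where r: "r \<in> EM_co" "x = class_co r" by (auto simp: K_co_def carrier_net_ring_Quot)
    obtain s where s: "s \<in> EM_sm" "(\<lambda>e. s e - r e) \<in> N_co" using approx[OF r(1)] by blast
    have "x = tau_sm (class_sm s)" using r s by (simp add: tau_sm_class_sm class_co_eq)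
    then show "x \<in> tau_sm ` carrier K_sm" using s(1) by (auto simp: K_sm_def carrier_net_ring_Quot)
  qed
  moreover have "tau_sm ` carrier K_sm \<subseteq> carrier (K_co :: (real \<Rightarrow> 'k) set ring)"
    using tau_sm_ring_hom unfolding ring_hom_def by auto
  ultimately show ?thesis
    using tau_sm_ring_hom inj_on_tau_sm by (auto simp: ring_iso_def bij_betw_def)
qed

theorem theorem3p6:
  shows "(tau_sm :: (real \<Rightarrow> real) set \<Rightarrow> _) \<in> ring_iso K_sm K_co
       \<and> (tau_sm :: (real \<Rightarrow> complex) set \<Rightarrow> _) \<in> ring_iso K_sm K_co"
  using tau_sm_ring_iso[OF EM_co_approx_real] tau_sm_ring_iso[OF EM_co_approx_complex] by blast

end
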